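(* Let $\Phi$ be a finite-valued Young function with $\Phi(t)\neq0$ for $t>0$, and suppose $q_\Phi>1$. Then there is a strictly convex Young function which is equivalent to $\Phi$.
   Context: A Young function is a map $\Phi:[0,\infty)\to[0,\infty]$ which is convex, satisfies $\Phi(0)=0$ and $\lim_{t\to\infty}\Phi(t)=+\infty$. Two Young functions $\Phi_1,\Phi_2$ are equivalent if there is $C\ge1$ with $C^{-1}\Phi_2\le\Phi_1\le C\Phi_2$ on $[0,\infty)$. For a finite-valued Young function positive on $(0,\infty)$, $q_\Phi=\inf_{t>0}\frac{t\Phi'_+(t)}{\Phi(t)}$, where $\Phi'_+$ is the right derivative. *)

theory Defs
  imports "HOL-Analysis.Analysis"
begin

text \<open>Young functions are modelled as maps real \<Rightarrow> ereal; only their values on [0,\<infinity>) matter.\<close>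

definition young_convex :: "(real \<Rightarrow> ereal) \<Rightarrow> bool" where
  "young_convex \<Phi> \<longleftrightarrow> (\<forall>x\<ge>0. \<forall>y\<ge>0. \<forall>a::real. 0 \<le> a \<and> a \<le> 1 \<longrightarrow>
      \<Phi> (a * x + (1 - a) * y) \<le> ereal a * \<Phi> x + ereal (1 - a) * \<Phi> y)"

definition young_function :: "(real \<Rightarrow> ereal) \<Rightarrow> bool" where
  "young_function \<Phi> \<longleftrightarrow> (\<forall>t\<ge>0. \<Phi> t \<ge> 0) \<and> young_convex \<Phi> \<and> \<Phi> 0 = 0 \<and>
      ((\<lambda>t. \<Phi> t) \<longlongrightarrow> \<infinity>) at_top"

definition strictly_convex_young :: "(real \<Rightarrow> ereal) \<Rightarrow> bool" where
  "strictly_convex_young \<Phi> \<longleftrightarrow> (\<forall>x\<ge>0. \<forall>y\<ge>0. \<forall>a::real. x \<noteq> y \<and> 0 < a \<and> a < 1 \<longrightarrow>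
      \<Phi> (a * x + (1 - a) * y) < ereal a * \<Phi> x + ereal (1 - a) * \<Phi> y)"

definition young_equivalent :: "(real \<Rightarrow> ereal) \<Rightarrow> (real \<Rightarrow> ereal) \<Rightarrow> bool" where
  "young_equivalent \<Phi>1 \<Phi>2 \<longleftrightarrow> (\<exists>C::real. C \<ge> 1 \<and> (\<forall>t\<ge>0.
      ereal (1 / C) * \<Phi>2 t \<le> \<Phi>1 t \<and> \<Phi>1 t \<le> ereal C * \<Phi>2 t))"

definition right_deriv :: "(real \<Rightarrow> real) \<Rightarrow> real \<Rightarrow> real" where
  "right_deriv f t = Lim (at_right 0) (\<lambda>h. (f (t + h) - f t) / h)"

definition q_index :: "(real \<Rightarrow> ereal) \<Rightarrow> real" where
  "q_index \<Phi> = (INF t\<in>{0<..}. t * right_deriv (\<lambda>s. real_of_ereal (\<Phi> s)) t / real_of_ereal (\<Phi> t))"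

end

theory Submission
  imports Defs
begin

text \<open>A finite convex \<Phi> with \<Phi>(0) = 0 and \<Phi> > 0 on (0,\<infinity>) is strictly increasing on [0,\<infinity>),
  so x \<noteq> y forces \<Phi>(x) \<noteq> \<Phi>(y). Composing with a strictly convex increasing g satisfying
  u \<le> g(u) \<le> 2u therefore gives a strictly convex Young function g \<circ> \<Phi> with
  \<Phi> \<le> g \<circ> \<Phi> \<le> 2\<Phi>.\<close>

definition strict_convex_on :: "'a::real_vector set \<Rightarrow> ('a \<Rightarrow> real) \<Rightarrow> bool" where
  "strict_convex_on S f \<longleftrightarrow> convex S \<and>
    (\<forall>x\<in>S. \<forall>y\<in>S. \<forall>t. x \<noteq> y \<and> 0 < t \<and> t < 1 \<longrightarrow>
      f ((1 - t) *\<^sub>R x + t *\<^sub>R y) < (1 - t) * f x + t * f y)"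

lemma strict_convex_onD:
  assumes "strict_convex_on S f" "x \<in> S" "y \<in> S" "x \<noteq> y" "0 < t" "t < 1"
  shows "f ((1 - t) *\<^sub>R x + t *\<^sub>R y) < (1 - t) * f x + t * f y"
  using assms by (simp add: strict_convex_on_def)

lemma strict_convex_on_imp_convex_on:
  assumes "strict_convex_on S f" shows "convex_on S f"
proof (rule convex_onI)
  show "convex S" using assms by (simp add: strict_convex_on_def)
  fix t :: real and x y assume "0 < t" "t < 1" "x \<in> S" "y \<in> S"
  then show "f ((1 - t) *\<^sub>R x + t *\<^sub>R y) \<le> (1 - t) * f x + t * f y"
    using assms unfolding strict_convex_on_def
    by (cases "x = y") (auto simp: algebra_simps simp flip: scaleR_add_left intro: less_imp_le)
qed

lemma convex_on_mono_compose:
  assumes f: "convex_on S f" and g: "convex_on T g" "mono_on T g"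
    and img: "f ` S \<subseteq> T"
  shows "convex_on S (g \<circ> f)"
proof (rule convex_onI)
  show "convex S" using f by (rule convex_on_imp_convex)
  fix t :: real and x y assume t: "0 < t" "t < 1" and xy: "x \<in> S" "y \<in> S"
  have "(1 - t) *\<^sub>R x + t *\<^sub>R y \<in> S"
    using convex_on_imp_convex[OF f] t xy by (simp add: convex_alt)
  moreover have "(1 - t) * f x + t * f y \<in> T"
    using convex_on_imp_convex[OF g(1)] img t xy unfolding convex_alt
    by (simp add: image_subset_iff)
  ultimately have "g (f ((1 - t) *\<^sub>R x + t *\<^sub>R y)) \<le> g ((1 - t) * f x + t * f y)"
    using img convex_onD[OF f, of t x y] t xy by (intro mono_onD[OF g(2)]) auto
  also have "\<dots> \<le> (1 - t) * g (f x) + t * g (f y)"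
    using convex_onD[OF g(1), of t "f x" "f y"] img t xy by auto
  finally show "(g \<circ> f) ((1 - t) *\<^sub>R x + t *\<^sub>R y) \<le> (1 - t) * (g \<circ> f) x + t * (g \<circ> f) y"
    by simp
qed

lemma strict_convex_on_mono_compose:
  assumes f: "convex_on S f" "inj_on f S" and g: "strict_convex_on T g" "mono_on T g"
    and img: "f ` S \<subseteq> T"
  shows "strict_convex_on S (g \<circ> f)"
  unfolding strict_convex_on_def
proof (intro conjI ballI allI impI)
  show "convex S" using f(1) by (rule convex_on_imp_convex)
  fix x y and t :: real assume xy: "x \<in> S" "y \<in> S" and t: "x \<noteq> y \<and> 0 < t \<and> t < 1"
  have T: "convex T" using g(1) by (simp add: strict_convex_on_def)
  have "(1 - t) *\<^sub>R x + t *\<^sub>R y \<in> S"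
    using convex_on_imp_convex[OF f(1)] t xy by (simp add: convex_alt)
  moreover have "(1 - t) * f x + t * f y \<in> T"
    using T img t xy unfolding convex_alt by (simp add: image_subset_iff)
  ultimately have "g (f ((1 - t) *\<^sub>R x + t *\<^sub>R y)) \<le> g ((1 - t) * f x + t * f y)"
    using img convex_onD[OF f(1), of t x y] t xy by (intro mono_onD[OF g(2)]) auto
  also have "\<dots> < (1 - t) * g (f x) + t * g (f y)"
  proof -
    have "f x \<noteq> f y" using inj_onD[OF f(2)] xy t by blast
    then show ?thesis using strict_convex_onD[OF g(1), of "f x" "f y" t] img xy t by auto
  qed
  finally show "(g \<circ> f) ((1 - t) *\<^sub>R x + t *\<^sub>R y) < (1 - t) * (g \<circ> f) x + t * (g \<circ> f) y"
    by simp
qed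

lemma convex_on_strict_mono_on:
  fixes f :: "real \<Rightarrow> real"
  assumes f: "convex_on {0..} f" "f 0 = 0" "\<And>t. 0 < t \<Longrightarrow> 0 < f t"
  shows "strict_mono_on {0..} f"
proof (rule strict_mono_onI)
  fix s t :: real assume "s \<in> {0..}" "t \<in> {0..}" "s < t"
  then have s: "0 \<le> s" and t: "0 < t" "s < t" by auto
  have "f s = f ((1 - s / t) *\<^sub>R 0 + (s / t) *\<^sub>R t)"
    using t by simp
  also have "\<dots> \<le> (1 - s / t) * f 0 + (s / t) * f t"
    using s t by (intro convex_onD[OF f(1)]) auto
  also have "\<dots> < f t"
    using f(2) f(3)[OF t(1)] t by (simp add: divide_less_eq)
  finally show "f s < f t" .
qed

text \<open>Since u + u^2/(1 + u) = 2u - 1 + 1/(1 + u), it lies between u and 2u and is strictly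
  convex on [0,\<infinity>) because 1/(1 + u) is.\<close>
definition strictifier :: "real \<Rightarrow> real" where
  "strictifier u = u + u\<^sup>2 / (1 + u)"

lemma strictifier_alt: "0 \<le> u \<Longrightarrow> strictifier u = 2 * u - 1 + 1 / (1 + u)"
  by (simp add: strictifier_def field_simps power2_eq_square)

lemma strictifier_bounds:
  assumes "0 \<le> u" shows "u \<le> strictifier u" "strictifier u \<le> 2 * u"
proof -
  have "u\<^sup>2 / (1 + u) \<le> u"
    using assms by (simp add: divide_le_eq power2_eq_square algebra_simps)
  then show "u \<le> strictifier u" "strictifier u \<le> 2 * u"
    using assms by (simp_all add: strictifier_def)
qed

lemma strictifier_0 [simp]: "strictifier 0 = 0"
  by (simp add: strictifier_def)

lemma mono_on_strictifier: "mono_on {0..} strictifier"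
proof (rule mono_onI)
  fix u v :: real assume "u \<in> {0..}" "v \<in> {0..}" "u \<le> v"
  then have uv: "0 \<le> u" "u \<le> v" by auto
  have "1 / (1 + u) - 1 / (1 + v) = (v - u) / ((1 + u) * (1 + v))"
    using uv by (simp add: field_simps)
  also have "\<dots> \<le> v - u"
  proof -
    have "1 \<le> (1 + u) * (1 + v)" using uv by (intro mult_ge1_I) auto
    then show ?thesis using uv by (simp add: divide_le_eq mult_le_cancel_left1)
  qed
  finally show "strictifier u \<le> strictifier v"
    using uv by (simp add: strictifier_alt)
qed

lemma strict_convex_on_strictifier: "strict_convex_on {0..} strictifier"
  unfolding strict_convex_on_def
proof (intro conjI ballI allI impI)
  show "convex {0::real..}" by (rule convex_real_interval)
  fix x y t :: real assume "x \<in> {0..}" "y \<in> {0..}" and t: "x \<noteq> y \<and> 0 < t \<and> t < 1"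
  then have xy: "0 \<le> x" "0 \<le> y" by auto
  define p q where "p = 1 + x" and "q = 1 + y"
  have pq: "p \<ge> 1" "q \<ge> 1" "p \<noteq> q" using xy t by (auto simp: p_def q_def)
  have m: "(1 - t) * p + t * q \<ge> 1"
  proof -
    have "(1 - t) * 1 \<le> (1 - t) * p" "t * 1 \<le> t * q"
      using pq t by (intro mult_left_mono; simp)+
    then show ?thesis by simp
  qed
  have "0 < t * (1 - t) * (p - q)\<^sup>2 / (p * q * ((1 - t) * p + t * q))"
    using pq t m by (intro divide_pos_pos mult_pos_pos) auto
  also have "\<dots> = (1 - t) / p + t / q - 1 / ((1 - t) * p + t * q)"
    using pq m by (simp add: field_simps power2_eq_square)
  finally have "1 / (1 + ((1 - t) * x + t * y)) < (1 - t) / (1 + x) + t / (1 + y)"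
    by (simp add: p_def q_def algebra_simps)
  moreover have "0 \<le> (1 - t) * x + t * y" using xy t by simp
  ultimately show "strictifier ((1 - t) *\<^sub>R x + t *\<^sub>R y)
      < (1 - t) * strictifier x + t * strictifier y"
    using xy by (simp add: strictifier_alt algebra_simps)
qed

lemma young_function_real_valued:
  assumes "young_function \<Phi>" and "\<forall>t\<ge>0. \<Phi> t = ereal (\<phi> t)"
  shows "convex_on {0..} \<phi>" "\<phi> 0 = 0" "\<And>t. 0 \<le> t \<Longrightarrow> 0 \<le> \<phi> t"
    and "filterlim \<phi> at_top at_top"
proof -
  note \<Phi> = assms(2)[rule_format]
  have Y: "\<forall>t\<ge>0. 0 \<le> \<Phi> t" "young_convex \<Phi>" "\<Phi> 0 = 0" "(\<Phi> \<longlongrightarrow> \<infinity>) at_top"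
    using assms(1) by (auto simp: young_function_def)
  show "convex_on {0..} \<phi>"
  proof (rule convex_onI)
    fix t x y :: real assume t: "0 < t" "t < 1" and xy: "x \<in> {0..}" "y \<in> {0..}"
    have "0 \<le> 1 - t" "1 - t \<le> 1" using t by auto
    then have "\<Phi> ((1 - t) * x + (1 - (1 - t)) * y) \<le> ereal (1 - t) * \<Phi> x + ereal (1 - (1 - t)) * \<Phi> y"
      using Y(2) xy unfolding young_convex_def by blast
    then show "\<phi> ((1 - t) *\<^sub>R x + t *\<^sub>R y) \<le> (1 - t) * \<phi> x + t * \<phi> y"
      using t xy by (simp add: \<Phi>)
  qed (rule convex_real_interval)
  show "\<phi> 0 = 0" using Y(3) \<Phi>[of 0] by simp
  show "0 \<le> \<phi> t" if "0 \<le> t" for t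
  proof -
    have "0 \<le> \<Phi> t" using Y(1) that by blast
    then show ?thesis by (simp add: \<Phi>[OF that])
  qed
  have "\<forall>\<^sub>F t in at_top. \<Phi> t = ereal (\<phi> t)"
    using eventually_ge_at_top[of 0] by eventually_elim (rule \<Phi>)
  with Y(4) have "((\<lambda>t. ereal (\<phi> t)) \<longlongrightarrow> \<infinity>) at_top"
    by (rule tendsto_cong[THEN iffD1, rotated])
  then show "filterlim \<phi> at_top at_top" by (simp add: tendsto_PInfty_eq_at_top)
qed

lemma young_function_ereal:
  assumes "convex_on {0..} \<psi>" "\<psi> 0 = 0" "\<And>t. 0 \<le> t \<Longrightarrow> 0 \<le> \<psi> t"
    and "filterlim \<psi> at_top at_top"
  shows "young_function (\<lambda>t. ereal (\<psi> t))"
  unfolding young_function_def young_convex_def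
proof (intro conjI allI impI)
  fix x y a :: real assume "0 \<le> x" "0 \<le> y" "0 \<le> a \<and> a \<le> 1"
  then show "ereal (\<psi> (a * x + (1 - a) * y)) \<le> ereal a * ereal (\<psi> x) + ereal (1 - a) * ereal (\<psi> y)"
    using convex_onD[OF assms(1), of "1 - a" x y] by simp
qed (use assms in \<open>auto simp: tendsto_PInfty_eq_at_top\<close>)

lemma strictly_convex_young_ereal:
  assumes "strict_convex_on {0..} \<psi>"
  shows "strictly_convex_young (\<lambda>t. ereal (\<psi> t))"
  unfolding strictly_convex_young_def
proof (intro allI impI)
  fix x y a :: real assume "0 \<le> x" "0 \<le> y" "x \<noteq> y \<and> 0 < a \<and> a < 1"
  then have "\<psi> ((1 - (1 - a)) *\<^sub>R x + (1 - a) *\<^sub>R y) < (1 - (1 - a)) * \<psi> x + (1 - a) * \<psi> y"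
    using assms by (intro strict_convex_onD) auto
  then show "ereal (\<psi> (a * x + (1 - a) * y)) < ereal a * ereal (\<psi> x) + ereal (1 - a) * ereal (\<psi> y)"
    by simp
qed

lemma young_function_strictifier:
  assumes "convex_on {0..} \<phi>" "\<phi> 0 = 0" "\<And>t. 0 \<le> t \<Longrightarrow> 0 \<le> \<phi> t"
    and "filterlim \<phi> at_top at_top"
  shows "young_function (\<lambda>t. ereal (strictifier (\<phi> t)))"
proof (rule young_function_ereal)
  have "\<phi> ` {0..} \<subseteq> {0..}" using assms(3) by auto
  with assms(1) strict_convex_on_imp_convex_on[OF strict_convex_on_strictifier] mono_on_strictifier
  show "convex_on {0..} (\<lambda>t. strictifier (\<phi> t))"
    unfolding comp_def[symmetric] by (rule convex_on_mono_compose)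
  have "\<forall>\<^sub>F t in at_top. \<phi> t \<le> strictifier (\<phi> t)"
    using eventually_ge_at_top[of 0] by eventually_elim (rule strictifier_bounds(1)[OF assms(3)])
  with assms(4) show "filterlim (\<lambda>t. strictifier (\<phi> t)) at_top at_top"
    by (rule filterlim_at_top_mono)
qed (use assms(2,3) strictifier_bounds(1) in \<open>auto intro: order_trans\<close>)

lemma strictly_convex_young_strictifier:
  assumes "convex_on {0..} \<phi>" "\<phi> 0 = 0" "\<And>t. 0 < t \<Longrightarrow> 0 < \<phi> t"
  shows "strictly_convex_young (\<lambda>t. ereal (strictifier (\<phi> t)))"
proof (rule strictly_convex_young_ereal)
  have "inj_on \<phi> {0..}"
    using convex_on_strict_mono_on[OF assms] by (rule strict_mono_on_imp_inj_on)
  moreover have "\<phi> ` {0..} \<subseteq> {0..}"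
    using assms(2,3) by (force simp: le_less)
  ultimately show "strict_convex_on {0..} (\<lambda>t. strictifier (\<phi> t))"
    using assms(1) strict_convex_on_strictifier mono_on_strictifier
    unfolding comp_def[symmetric] by (intro strict_convex_on_mono_compose)
qed

lemma young_equivalentI:
  assumes "1 \<le> C" and "\<forall>t\<ge>0. \<Phi> t = ereal (\<phi> t)"
    and "\<And>t. 0 \<le> t \<Longrightarrow> \<phi> t \<le> C * \<psi> t" "\<And>t. 0 \<le> t \<Longrightarrow> \<psi> t \<le> C * \<phi> t"
  shows "young_equivalent (\<lambda>t. ereal (\<psi> t)) \<Phi>"
  unfolding young_equivalent_def
proof (intro exI[of _ C] conjI allI impI)
  fix t :: real assume t: "0 \<le> t"
  note \<Phi> = assms(2)[rule_format]
  have "\<phi> t / C \<le> \<psi> t" using assms(1) assms(3)[OF t] by (simp add: divide_le_eq mult.commute)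
  then show "ereal (1 / C) * \<Phi> t \<le> ereal (\<psi> t)" by (simp add: \<Phi>[OF t])
  show "ereal (\<psi> t) \<le> ereal C * \<Phi> t" using assms(4)[OF t] by (simp add: \<Phi>[OF t])
qed (rule assms(1))

lemma young_equivalent_strictifier:
  assumes "\<forall>t\<ge>0. \<Phi> t = ereal (\<phi> t)" "\<And>t. 0 \<le> t \<Longrightarrow> 0 \<le> \<phi> t"
  shows "young_equivalent (\<lambda>t. ereal (strictifier (\<phi> t))) \<Phi>"
proof (rule young_equivalentI[OF _ assms(1), of 2])
  fix t :: real assume "0 \<le> t"
  then have "0 \<le> \<phi> t" by (rule assms(2))
  with strictifier_bounds[OF this]
  show "\<phi> t \<le> 2 * strictifier (\<phi> t)" "strictifier (\<phi> t) \<le> 2 * \<phi> t" by linarith+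
qed simp

theorem mainTheorem10:
  fixes \<Phi> :: "real \<Rightarrow> ereal"
  assumes "young_function \<Phi>"
    and "\<forall>t\<ge>0. \<Phi> t < \<infinity>"
    and "\<forall>t>0. \<Phi> t \<noteq> 0"
    and "q_index \<Phi> > 1"
  shows "\<exists>\<Psi>. young_function \<Psi> \<and> strictly_convex_young \<Psi> \<and> young_equivalent \<Psi> \<Phi>"
proof -
  define \<phi> where "\<phi> t = real_of_ereal (\<Phi> t)" for t
  have \<Phi>: "\<forall>t\<ge>0. \<Phi> t = ereal (\<phi> t)"
  proof (intro allI impI)
    fix t :: real assume "0 \<le> t"
    then have "0 \<le> \<Phi> t" "\<Phi> t < \<infinity>" using assms(1,2) by (auto simp: young_function_def)
    then show "\<Phi> t = ereal (\<phi> t)" unfolding \<phi>_def by (cases "\<Phi> t") auto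
  qed
  note \<phi> = young_function_real_valued[OF assms(1) \<Phi>]
  have pos: "0 < \<phi> t" if "0 < t" for t
  proof -
    have "\<Phi> t \<noteq> 0" "\<Phi> t = ereal (\<phi> t)" using assms(3) \<Phi> that by auto
    then show ?thesis using \<phi>(3)[of t] that by simp
  qed
  show ?thesis
    using young_function_strictifier[OF \<phi>] strictly_convex_young_strictifier[OF \<phi>(1,2) pos]
      young_equivalent_strictifier[OF \<Phi> \<phi>(3)] by blast
qed

end
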